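(* Let $F=\{T_1,\dots,T_m\}$ be a random forest on $X_n$ and $\vec x\in\{0,1\}^n$ an instance with $F(\vec x)=1$. Let $y_1,\dots,y_m$ be fresh variables, and consider the Partial MaxSAT instance $(C_{\mathrm{soft}},C_{\mathrm{hard}})$ with $$C_{\mathrm{soft}}=\{\overline x_i: x_i\in t_{\vec x}\}\cup\{x_i:\overline x_i\in t_{\vec x}\}\quad(\text{unit clauses}),$$ $$C_{\mathrm{hard}}=\{(\overline y_i\vee c_{\mid\vec x}): i\in[m],\ c\in\mathrm{CNF}(T_i)\}\cup \mathrm{CNF}\Big(\sum_{i=1}^m y_i>\frac m2\Big),$$ where $c_{\mid\vec x}=c\cap t_{\vec x}$ is the clause consisting of those literals of $c$ that belong to $t_{\vec x}$, and $\mathrm{CNF}(\sum_{i=1}^m y_i>\frac m2)$ is a CNF encoding of the cardinality constraint $\sum_i y_i>\frac m2$ (over $y_1,\dots,y_m$ and possibly further fresh auxiliary variables, whose projection onto $y_1,\dots,y_m$ is equivalent to the constraint). If $\vec z^*$ is an optimal solution of $(C_{\mathrm{soft}},C_{\mathrm{hard}})$, then the term $t_{\vec x}\cap t_{\vec z^*}$ (the set of literals of $t_{\vec x}$ that are true under $\vec z^*$) is a minimal majoritary reason for $\vec x$ given $F$.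
   Context: A (Boolean) decision tree on $X_n=\{x_1,\dots,x_n\}$ is a binary tree whose internal nodes are labeled by variables of $X_n$ (each variable occurring at most once on any root-to-leaf path) and whose leaves are labeled $0$ or $1$; its value $T(\vec x)$ is the label of the leaf reached by going left (resp. right) at a node labeled $x_i$ when $x_i=0$ (resp. $1$). $\mathrm{CNF}(T)$ is the CNF formula whose clauses are the negations of the terms describing the root-to-leaf paths of $T$ ending in a $0$-leaf; it is equivalent to $T$. A random forest $F=\{T_1,\dots,T_m\}$ has value $F(\vec x)=1$ iff $\frac1m\sum_i T_i(\vec x)>\frac12$. $[m]=\{1,\dots,m\}$. For an assignment $\vec z$, $t_{\vec z}=\bigwedge_i x_i^{z_i}$ with $x_i^1=x_i$, $x_i^0=\overline x_i$ (terms are treated as sets of literals). A term $t$ covers $\vec x$ if $t\subseteq t_{\vec x}$; an implicant of a Boolean function $f$ is a term $t$ with $f(\vec z)=1$ for all $\vec z$ covered by $t$. A majoritary reason for $\vec x$ given $F$ (with $F(\vec x)=1$) is a term $t$ covering $\vec x$ that is an implicant of at least $\lfloor m/2\rfloor+1$ trees $T_i$, and such that for every $l\in t$, $t\setminus\{l\}$ is not; a minimal majoritary reason is one of minimum size. A Partial MaxSAT instance $(C_{\mathrm{soft}},C_{\mathrm{hard}})$ consists of two finite sets of clauses; an optimal solution is an assignment satisfying all clauses of $C_{\mathrm{hard}}$ and maximizing the number of satisfied clauses of $C_{\mathrm{soft}}$. *)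

theory Defs
  imports Main
begin

text \<open>Variables x_1..x_n of X_n are represented by indices i < n (0-based).
  A literal is a pair (i, b) meaning x_i^b (b = True: x_i, b = False: negated x_i). Instances / assignments are functions nat => bool
  (only values at indices < n are relevant).\<close>

type_synonym lit = "nat \<times> bool"

definition neg_lit :: "lit \<Rightarrow> lit" where
  "neg_lit l = (fst l, \<not> snd l)"

definition term_of :: "nat \<Rightarrow> (nat \<Rightarrow> bool) \<Rightarrow> lit set" where
  "term_of n z = {(i, z i) | i. i < n}"

definition covers :: "nat \<Rightarrow> lit set \<Rightarrow> (nat \<Rightarrow> bool) \<Rightarrow> bool" where
  "covers n t z \<longleftrightarrow> t \<subseteq> term_of n z"

definition implicant :: "nat \<Rightarrow> lit set \<Rightarrow> ((nat \<Rightarrow> bool) \<Rightarrow> bool) \<Rightarrow> bool" where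
  "implicant n t f \<longleftrightarrow> (\<forall>z. covers n t z \<longrightarrow> f z)"

datatype dt = Leaf bool | Node nat dt dt

fun dt_eval :: "dt \<Rightarrow> (nat \<Rightarrow> bool) \<Rightarrow> bool" where
  "dt_eval (Leaf b) x = b"
| "dt_eval (Node i l r) x = (if x i then dt_eval r x else dt_eval l x)"

fun dt_vars :: "dt \<Rightarrow> nat set" where
  "dt_vars (Leaf b) = {}"
| "dt_vars (Node i l r) = insert i (dt_vars l \<union> dt_vars r)"

fun wf_dt :: "nat \<Rightarrow> dt \<Rightarrow> bool" where
  "wf_dt n (Leaf b) = True"
| "wf_dt n (Node i l r) = (i < n \<and> i \<notin> dt_vars l \<and> i \<notin> dt_vars r \<and> wf_dt n l \<and> wf_dt n r)"

fun zero_paths :: "dt \<Rightarrow> lit set set" where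
  "zero_paths (Leaf b) = (if b then {} else {{}})"
| "zero_paths (Node i l r) =
     (insert (i, False)) ` zero_paths l \<union> (insert (i, True)) ` zero_paths r"

definition dt_cnf :: "dt \<Rightarrow> lit set set" where
  "dt_cnf T = (\<lambda>p. neg_lit ` p) ` zero_paths T"

text \<open>A forest T_1..T_m is a list of trees (T_{i+1} = F ! i).\<close>
definition rf_eval :: "dt list \<Rightarrow> (nat \<Rightarrow> bool) \<Rightarrow> bool" where
  "rf_eval F x \<longleftrightarrow> length F < 2 * card {i. i < length F \<and> dt_eval (F ! i) x}"

definition n_implied :: "nat \<Rightarrow> dt list \<Rightarrow> lit set \<Rightarrow> nat" where
  "n_implied n F t = card {i. i < length F \<and> implicant n t (dt_eval (F ! i))}"

definition majoritary_reason :: "nat \<Rightarrow> dt list \<Rightarrow> (nat \<Rightarrow> bool) \<Rightarrow> lit set \<Rightarrow> bool" where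
  "majoritary_reason n F x t \<longleftrightarrow>
     covers n t x \<and> n_implied n F t \<ge> length F div 2 + 1 \<and>
     (\<forall>l\<in>t. \<not> (n_implied n F (t - {l}) \<ge> length F div 2 + 1))"

definition minimal_majoritary_reason :: "nat \<Rightarrow> dt list \<Rightarrow> (nat \<Rightarrow> bool) \<Rightarrow> lit set \<Rightarrow> bool" where
  "minimal_majoritary_reason n F x t \<longleftrightarrow>
     majoritary_reason n F x t \<and>
     (\<forall>t'. majoritary_reason n F x t' \<longrightarrow> card t \<le> card t')"

text \<open>Variables of the MaxSAT instance: X i (the x_{i+1}), Y j (the y_{j+1}), A a (auxiliary).\<close>
datatype 'a mvar = X nat | Y nat | A 'a

type_synonym 'a mclause = "('a mvar \<times> bool) set"

definition sat_clause :: "('a mvar \<Rightarrow> bool) \<Rightarrow> 'a mclause \<Rightarrow> bool" where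
  "sat_clause \<sigma> c \<longleftrightarrow> (\<exists>(v, b)\<in>c. \<sigma> v = b)"

definition optimal_solution ::
  "'a mclause set \<Rightarrow> 'a mclause set \<Rightarrow> ('a mvar \<Rightarrow> bool) \<Rightarrow> bool" where
  "optimal_solution Soft Hard \<sigma> \<longleftrightarrow>
     (\<forall>c\<in>Hard. sat_clause \<sigma> c) \<and>
     (\<forall>\<sigma>'. (\<forall>c\<in>Hard. sat_clause \<sigma>' c) \<longrightarrow>
            card {c\<in>Soft. sat_clause \<sigma>' c} \<le> card {c\<in>Soft. sat_clause \<sigma> c})"

definition card_encoding :: "nat \<Rightarrow> 'a mclause set \<Rightarrow> bool" where
  "card_encoding m Card \<longleftrightarrow>
     finite Card \<and> (\<forall>c\<in>Card. finite c) \<and>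
     (\<forall>c\<in>Card. \<forall>(v, b)\<in>c. (\<exists>j<m. v = Y j) \<or> (\<exists>a. v = A a)) \<and>
     (\<forall>\<rho> :: nat \<Rightarrow> bool.
        (\<exists>\<sigma>. (\<forall>j<m. \<sigma> (Y j) = \<rho> j) \<and> (\<forall>c\<in>Card. sat_clause \<sigma> c))
        \<longleftrightarrow> m < 2 * card {j. j < m \<and> \<rho> j})"

definition soft_clauses :: "nat \<Rightarrow> (nat \<Rightarrow> bool) \<Rightarrow> 'a mclause set" where
  "soft_clauses n x = {{(X i, \<not> x i)} | i. i < n}"

definition tree_hard_clauses :: "nat \<Rightarrow> dt list \<Rightarrow> (nat \<Rightarrow> bool) \<Rightarrow> 'a mclause set" where
  "tree_hard_clauses n F x =
     {insert (Y j, False) ((\<lambda>(i, b). (X i, b)) ` (c \<inter> term_of n x)) | j c.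
        j < length F \<and> c \<in> dt_cnf (F ! j)}"

definition reason_of :: "nat \<Rightarrow> (nat \<Rightarrow> bool) \<Rightarrow> ('a mvar \<Rightarrow> bool) \<Rightarrow> lit set" where
  "reason_of n x \<sigma> = term_of n x \<inter> term_of n (\<lambda>i. \<sigma> (X i))"

end

theory Submission
  imports Defs
begin

text \<open>
  Decision trees are read-once, so no 0-path contains complementary literals; hence a
  subterm t of t_x is an implicant of T exactly when it meets every clause of CNF(T).
  Consequently the hard clauses (not y_j or c|x) say precisely that, whenever y_j is true,
  the term t_x \<inter> t_z is an implicant of T_j, and the cardinality clauses make a majority of
  the y_j true. Conversely, every subterm t of t_x implying a majority of the trees gives a
  feasible assignment: set x_i to agree with the instance exactly on the variables of t and
  y_j to whether t implies T_j. An assignment z satisfies n - |t_x \<inter> t_z| soft clauses, so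
  optimality makes t_x \<inter> t_z a smallest majority implicant covering x, and a smallest one
  is in particular irreducible.
\<close>

lemma zero_path_matching_Node:
  "(\<exists>p\<in>zero_paths (Node i l r). \<forall>(k, b)\<in>p. z k = b) \<longleftrightarrow>
   (if z i then \<exists>p\<in>zero_paths r. \<forall>(k, b)\<in>p. z k = b else \<exists>p\<in>zero_paths l. \<forall>(k, b)\<in>p. z k = b)"
  by (auto simp: Bex_def)

lemma dt_eval_False_iff_zero_path:
  "\<not> dt_eval T z \<longleftrightarrow> (\<exists>p\<in>zero_paths T. \<forall>(i, b)\<in>p. z i = b)"
proof (induction T)
  case (Node i l r)
  then show ?case
    unfolding zero_path_matching_Node by simp
qed simp

lemma zero_path_vars: "p \<in> zero_paths T \<Longrightarrow> (i, b) \<in> p \<Longrightarrow> i \<in> dt_vars T"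
  by (induction T arbitrary: p) (auto split: if_splits)

lemma zero_path_consistent:
  "wf_dt n T \<Longrightarrow> p \<in> zero_paths T \<Longrightarrow> (i, b) \<in> p \<Longrightarrow> (i, \<not> b) \<notin> p"
proof (induction T arbitrary: p)
  case (Node k l r)
  then show ?case by (auto dest: zero_path_vars)
qed (simp split: if_splits)

lemma implicant_if_meets_cnf:
  assumes "\<forall>c\<in>dt_cnf T. c \<inter> t \<noteq> {}"
  shows "implicant n t (dt_eval T)"
  unfolding implicant_def
proof (intro allI impI, rule ccontr)
  fix z assume "covers n t z" and "\<not> dt_eval T z"
  then obtain p where p: "p \<in> zero_paths T" "\<forall>(i, b)\<in>p. z i = b"
    using dt_eval_False_iff_zero_path by blast
  with assms obtain i b where "(i, b) \<in> p" "(i, \<not> b) \<in> t"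
    unfolding dt_cnf_def neg_lit_def by fastforce
  with p \<open>covers n t z\<close> show False
    unfolding covers_def term_of_def by fastforce
qed

lemma implicant_dt_iff_meets_cnf:
  assumes "wf_dt n T" and "covers n t x"
  shows "implicant n t (dt_eval T) \<longleftrightarrow> (\<forall>c\<in>dt_cnf T. c \<inter> t \<noteq> {})"
proof
  assume implicant: "implicant n t (dt_eval T)"
  show "\<forall>c\<in>dt_cnf T. c \<inter> t \<noteq> {}"
  proof (rule ccontr)
    assume "\<not> ?thesis"
    then obtain p where p: "p \<in> zero_paths T" and disjoint: "neg_lit ` p \<inter> t = {}"
      unfolding dt_cnf_def by blast
    define z where "z i = (if (i, \<not> x i) \<in> p then \<not> x i else x i)" for i
    have "covers n t z"
      using assms(2) disjoint unfolding covers_def term_of_def z_def neg_lit_def by fastforce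
    moreover have "\<forall>(i, b)\<in>p. z i = b"
    proof clarify
      fix i b assume "(i, b) \<in> p"
      then show "z i = b"
        using zero_path_consistent[OF assms(1) p] unfolding z_def by (cases b; cases "x i") fastforce+
    qed
    ultimately show False
      using implicant p dt_eval_False_iff_zero_path unfolding implicant_def by blast
  qed
qed (rule implicant_if_meets_cnf)

lemma sat_tree_hard_clauses_iff:
  assumes "\<forall>T\<in>set F. wf_dt n T"
  shows "(\<forall>c\<in>tree_hard_clauses n F x. sat_clause \<sigma> c) \<longleftrightarrow>
    (\<forall>j<length F. \<sigma> (Y j) \<longrightarrow> implicant n (reason_of n x \<sigma>) (dt_eval (F ! j)))"
proof -
  have sat_iff: "sat_clause \<sigma> (insert (Y j, False) ((\<lambda>(i, b). (X i, b)) ` (c \<inter> term_of n x)))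
      \<longleftrightarrow> (\<sigma> (Y j) \<longrightarrow> c \<inter> reason_of n x \<sigma> \<noteq> {})" for j c
    by (force simp: sat_clause_def reason_of_def term_of_def)
  have "covers n (reason_of n x \<sigma>) x"
    by (simp add: covers_def reason_of_def)
  then have implicant_iff: "implicant n (reason_of n x \<sigma>) (dt_eval (F ! j))
      \<longleftrightarrow> (\<forall>c\<in>dt_cnf (F ! j). c \<inter> reason_of n x \<sigma> \<noteq> {})" if "j < length F" for j
    using assms that by (intro implicant_dt_iff_meets_cnf) auto
  have "(\<forall>c\<in>tree_hard_clauses n F x. sat_clause \<sigma> c) \<longleftrightarrow>
      (\<forall>j<length F. \<forall>c\<in>dt_cnf (F ! j). \<sigma> (Y j) \<longrightarrow> c \<inter> reason_of n x \<sigma> \<noteq> {})"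
    unfolding tree_hard_clauses_def sat_iff[symmetric] by blast
  also have "\<dots> \<longleftrightarrow> (\<forall>j<length F. \<sigma> (Y j) \<longrightarrow> implicant n (reason_of n x \<sigma>) (dt_eval (F ! j)))"
    using implicant_iff by blast
  finally show ?thesis .
qed

lemma card_sat_soft_clauses:
  "card {c \<in> soft_clauses n x. sat_clause \<sigma> c} + card (reason_of n x \<sigma>) = n"
proof -
  have "{c \<in> soft_clauses n x. sat_clause \<sigma> c} = (\<lambda>i. {(X i, \<not> x i)}) ` {i. i < n \<and> \<sigma> (X i) \<noteq> x i}"
    unfolding soft_clauses_def sat_clause_def by auto
  then have flipped: "card {c \<in> soft_clauses n x. sat_clause \<sigma> c} = card {i. i < n \<and> \<sigma> (X i) \<noteq> x i}"
    by (simp add: card_image inj_on_def)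
  have "reason_of n x \<sigma> = (\<lambda>i. (i, x i)) ` {i. i < n \<and> \<sigma> (X i) = x i}"
    unfolding reason_of_def term_of_def by auto
  then have kept: "card (reason_of n x \<sigma>) = card {i. i < n \<and> \<sigma> (X i) = x i}"
    by (simp add: card_image inj_on_def)
  have "card {i. i < n \<and> \<sigma> (X i) \<noteq> x i} + card {i. i < n \<and> \<sigma> (X i) = x i}
      = card ({i. i < n \<and> \<sigma> (X i) \<noteq> x i} \<union> {i. i < n \<and> \<sigma> (X i) = x i})"
    by (rule card_Un_disjoint[symmetric]) auto
  also have "{i. i < n \<and> \<sigma> (X i) \<noteq> x i} \<union> {i. i < n \<and> \<sigma> (X i) = x i} = {..<n}"
    by auto
  finally show ?thesis
    using flipped kept by simp
qed

lemma card_encoding_projection: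
  assumes "card_encoding m Card"
  shows "(\<exists>\<sigma>. (\<forall>j<m. \<sigma> (Y j) = \<rho> j) \<and> (\<forall>c\<in>Card. sat_clause \<sigma> c))
    \<longleftrightarrow> m < 2 * card {j. j < m \<and> \<rho> j}"
  using assms unfolding card_encoding_def by (elim conjE allE)

lemma card_encoding_majority:
  assumes "card_encoding m Card" and "\<forall>c\<in>Card. sat_clause \<sigma> c"
  shows "m < 2 * card {j. j < m \<and> \<sigma> (Y j)}"
  using assms(2) card_encoding_projection[OF assms(1), of "\<lambda>j. \<sigma> (Y j)"] by blast

lemma card_encoding_extend:
  assumes "card_encoding m Card" and "m < 2 * card {j. j < m \<and> \<rho> j}"
  obtains \<sigma> where "\<forall>i. \<sigma> (X i) = f i" and "\<forall>j<m. \<sigma> (Y j) = \<rho> j"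
    and "\<forall>c\<in>Card. sat_clause \<sigma> c"
proof -
  obtain \<sigma>\<^sub>0 where \<sigma>\<^sub>0: "\<forall>j<m. \<sigma>\<^sub>0 (Y j) = \<rho> j" "\<forall>c\<in>Card. sat_clause \<sigma>\<^sub>0 c"
    using card_encoding_projection[OF assms(1)] assms(2) by blast
  define \<sigma> where "\<sigma> v = (case v of X i \<Rightarrow> f i | _ \<Rightarrow> \<sigma>\<^sub>0 v)" for v
  have agree: "\<sigma> v = \<sigma>\<^sub>0 v" if "(v, b) \<in> c" "c \<in> Card" for v b c
  proof -
    have "(\<exists>j<m. v = Y j) \<or> (\<exists>a. v = A a)"
      using assms(1) that unfolding card_encoding_def by blast
    then show ?thesis
      by (auto simp: \<sigma>_def)
  qed
  have sat_Card: "\<forall>c\<in>Card. sat_clause \<sigma> c"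
  proof
    fix c assume "c \<in> Card"
    then obtain v b where "(v, b) \<in> c" "\<sigma>\<^sub>0 v = b"
      using \<sigma>\<^sub>0(2) unfolding sat_clause_def by blast
    moreover have "\<sigma> v = \<sigma>\<^sub>0 v"
      using agree[OF \<open>(v, b) \<in> c\<close> \<open>c \<in> Card\<close>] .
    ultimately show "sat_clause \<sigma> c"
      unfolding sat_clause_def by auto
  qed
  have "\<forall>i. \<sigma> (X i) = f i" "\<forall>j<m. \<sigma> (Y j) = \<rho> j"
    using \<sigma>\<^sub>0(1) by (simp_all add: \<sigma>_def)
  with sat_Card show ?thesis
    by (intro that) auto
qed

lemma reason_of_majority:
  assumes "\<forall>T\<in>set F. wf_dt n T" and "card_encoding (length F) Card"
    and "\<forall>c\<in>tree_hard_clauses n F x \<union> Card. sat_clause \<sigma> c"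
  shows "length F div 2 + 1 \<le> n_implied n F (reason_of n x \<sigma>)"
proof -
  have "\<forall>j<length F. \<sigma> (Y j) \<longrightarrow> implicant n (reason_of n x \<sigma>) (dt_eval (F ! j))"
    using assms(3) sat_tree_hard_clauses_iff[OF assms(1)] by blast
  then have "card {j. j < length F \<and> \<sigma> (Y j)} \<le> n_implied n F (reason_of n x \<sigma>)"
    unfolding n_implied_def by (intro card_mono) auto
  moreover have "length F < 2 * card {j. j < length F \<and> \<sigma> (Y j)}"
    using assms(2,3) by (auto intro: card_encoding_majority)
  ultimately show ?thesis
    by linarith
qed

lemma optimal_solution_reason_card_le:
  assumes wf: "\<forall>T\<in>set F. wf_dt n T" and encoding: "card_encoding (length F) Card"
    and optimal: "optimal_solution (soft_clauses n x) (tree_hard_clauses n F x \<union> Card) z"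
    and "covers n t x" and "length F div 2 + 1 \<le> n_implied n F t"
  shows "card (reason_of n x z) \<le> card t"
proof -
  have "length F < 2 * card {j. j < length F \<and> implicant n t (dt_eval (F ! j))}"
    using assms(5) unfolding n_implied_def by linarith
  then obtain \<sigma> where X: "\<forall>i. \<sigma> (X i) = (if (i, x i) \<in> t then x i else \<not> x i)"
    and Y: "\<forall>j<length F. \<sigma> (Y j) = implicant n t (dt_eval (F ! j))"
    and "\<forall>c\<in>Card. sat_clause \<sigma> c"
    by (rule card_encoding_extend[OF encoding, where f = "\<lambda>i. if (i, x i) \<in> t then x i else \<not> x i"]) auto
  have "reason_of n x \<sigma> = t"
    using \<open>covers n t x\<close> X unfolding covers_def reason_of_def term_of_def by auto
  with Y have "\<forall>c\<in>tree_hard_clauses n F x. sat_clause \<sigma> c"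
    by (simp add: sat_tree_hard_clauses_iff[OF wf])
  with \<open>\<forall>c\<in>Card. sat_clause \<sigma> c\<close> optimal
  have "card {c \<in> soft_clauses n x. sat_clause \<sigma> c} \<le> card {c \<in> soft_clauses n x. sat_clause z c}"
    unfolding optimal_solution_def by blast
  with \<open>reason_of n x \<sigma> = t\<close> show ?thesis
    using card_sat_soft_clauses[of n x \<sigma>] card_sat_soft_clauses[of n x z] by simp
qed

lemma minimal_majoritary_reasonI:
  assumes "covers n t x" and "length F div 2 + 1 \<le> n_implied n F t"
    and minimum: "\<And>t'. covers n t' x \<Longrightarrow> length F div 2 + 1 \<le> n_implied n F t' \<Longrightarrow> card t \<le> card t'"
  shows "minimal_majoritary_reason n F x t"
proof -
  have "finite t"
    using \<open>covers n t x\<close> unfolding covers_def term_of_def by (rule finite_subset) simp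
  then have "\<not> length F div 2 + 1 \<le> n_implied n F (t - {l})" if "l \<in> t" for l
    using minimum[of "t - {l}"] card_Diff1_less[of t l] \<open>covers n t x\<close> that
    unfolding covers_def by fastforce
  with assms show ?thesis
    unfolding minimal_majoritary_reason_def majoritary_reason_def by blast
qed

theorem proposition8:
  fixes n :: nat and F :: "dt list" and x :: "nat \<Rightarrow> bool"
    and Card :: "'a mclause set" and z :: "'a mvar \<Rightarrow> bool"
  assumes "\<forall>T\<in>set F. wf_dt n T"
    and "rf_eval F x"
    and "card_encoding (length F) Card"
    and "optimal_solution (soft_clauses n x) (tree_hard_clauses n F x \<union> Card) z"
  shows "minimal_majoritary_reason n F x (reason_of n x z)"
proof (rule minimal_majoritary_reasonI)
  show "covers n (reason_of n x z) x"
    by (simp add: covers_def reason_of_def)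
  show "length F div 2 + 1 \<le> n_implied n F (reason_of n x z)"
    using assms(4) by (intro reason_of_majority[OF assms(1,3)]) (simp add: optimal_solution_def)
  show "card (reason_of n x z) \<le> card t'"
    if "covers n t' x" and "length F div 2 + 1 \<le> n_implied n F t'" for t'
    using optimal_solution_reason_card_le[OF assms(1,3,4) that] .
qed

end
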